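(* For $z=x+iy\in\mathbb{C}$ (with $x,y\in\mathbb{R}$) put $$A(z)=1-y,\qquad B(z)=x^2+y^2-y,\qquad C(z)=y,$$ and $\delta(z)=\delta\big(A(z),B(z),C(z)\big)$, where $\delta$ is the Apollonian depth function on real triples. Consider the maps $$F(x,y)=(x,\,1-y),\qquad S(x,y)=\Big(\tfrac{x}{x^2+y^2},\,\tfrac{y}{x^2+y^2}\Big)\ \ ((x,y)\neq(0,0)),$$ $$R(x,y)=\Big(\tfrac{x}{x^2+(y-1)^2},\,\tfrac{x^2+y^2-y}{x^2+(y-1)^2}\Big)\ \ ((x,y)\neq(0,1)),$$ i.e. $F$ is the reflection in the line $y=1/2$, $S$ is the inversion in the circle $x^2+y^2=1$, and $R$ is the inversion in the circle $x^2+(y-1)^2=1$. Then, for every $z$ in the domain of the respective map, there is a real number $\lambda>0$ (depending on the map and on $z$) such that $$\big(A(Fz),B(Fz),C(Fz)\big)=\big(C(z),B(z),A(z)\big),$$ $$\big(A(Sz),B(Sz),C(Sz)\big)=\lambda\big(B(z),A(z),C(z)\big),$$ $$\big(A(Rz),B(Rz),C(Rz)\big)=\lambda\big(A(z),C(z),B(z)\big),$$ i.e. $F$ interchanges $C$ and $A$, $S$ interchanges $A$ and $B$, and $R$ interchanges $B$ and $C$, up to a common positive rescaling of the three values. Moreover $\delta(Fz)=\delta(z)$, $\delta(Sz)=\delta(z)$ and $\delta(Rz)=\delta(z)$.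
   Context: The Apollonian depth function $\delta:\mathbb{R}^3\to\mathbb{N}\cup\{\infty\}$ is defined as follows. If any of $a,b,c$ is $\le 0$, then $\delta(a,b,c)=0$. Otherwise one performs a process: one step replaces the greatest entry of the current triple by $a+b+c-2\sqrt{ab+bc+ca}$ (where $a,b,c$ are the current entries). The step is repeated until the newly produced number is negative or $0$; $\delta(a,b,c)$ is the number of steps performed (counting the step that produces the non-positive number), and $\delta(a,b,c)=\infty$ if this never happens. For example $(179,62,23)\to(62,23,6)\to(23,6,3)\to(3,2,-1)$, so $\delta(179,62,23)=3$. Geometrically, $A(z),B(z),C(z)$ are (up to a common positive scale) the signed curvatures of the three mutually tangent disks of a tricycle whose two tangency spinors, normalized, are $(1,0)$ and $(x,y)$. *)

theory Defs
  imports Complex_Main "HOL-Library.Extended_Nat"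
begin

definition apo_step :: "real \<times> real \<times> real \<Rightarrow> real \<times> real \<times> real" where
  "apo_step t = (case t of (a, b, c) \<Rightarrow>
     (let d = a + b + c - 2 * sqrt (a*b + b*c + c*a) in
      if b \<le> a \<and> c \<le> a then (d, b, c)
      else if c \<le> b then (a, d, c)
      else (a, b, d)))"

definition nonpos_triple :: "real \<times> real \<times> real \<Rightarrow> bool" where
  "nonpos_triple t = (case t of (a, b, c) \<Rightarrow> a \<le> 0 \<or> b \<le> 0 \<or> c \<le> 0)"

definition apo_depth :: "real \<Rightarrow> real \<Rightarrow> real \<Rightarrow> enat" where
  "apo_depth a b c =
     (if \<exists>n. nonpos_triple ((apo_step ^^ n) (a, b, c))
      then enat (LEAST n. nonpos_triple ((apo_step ^^ n) (a, b, c)))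
      else \<infinity>)"

definition Af :: "complex \<Rightarrow> real" where "Af z = 1 - Im z"
definition Bf :: "complex \<Rightarrow> real" where "Bf z = (Re z)^2 + (Im z)^2 - Im z"
definition Cf :: "complex \<Rightarrow> real" where "Cf z = Im z"

definition depth_z :: "complex \<Rightarrow> enat" where
  "depth_z z = apo_depth (Af z) (Bf z) (Cf z)"

definition Fmap :: "complex \<Rightarrow> complex" where
  "Fmap z = Complex (Re z) (1 - Im z)"

definition Smap :: "complex \<Rightarrow> complex" where
  "Smap z = Complex (Re z / ((Re z)^2 + (Im z)^2)) (Im z / ((Re z)^2 + (Im z)^2))"

definition Rmap :: "complex \<Rightarrow> complex" where
  "Rmap z = Complex (Re z / ((Re z)^2 + (Im z - 1)^2))
                    (((Re z)^2 + (Im z)^2 - Im z) / ((Re z)^2 + (Im z - 1)^2))"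

end

theory Submission imports Defs begin

text \<open>The Apollonian step is homogeneous of degree one and symmetric in the three entries,
so the depth is invariant under positive rescaling and permutation of the triple.
The three maps act on the triple (A, B, C) by such transformations: the reflection F swaps
A and C exactly, the inversion S swaps A and B up to the factor 1/|z|^2, and the inversion R
swaps B and C up to the factor 1/|z - i|^2.\<close>

definition scale_triple :: "real \<Rightarrow> real \<times> real \<times> real \<Rightarrow> real \<times> real \<times> real" where
  "scale_triple l = (\<lambda>(a, b, c). (l * a, l * b, l * c))"

definition triple_perms :: "real \<times> real \<times> real \<Rightarrow> (real \<times> real \<times> real) set" where
  "triple_perms = (\<lambda>(a, b, c). {(a, b, c), (a, c, b), (b, a, c), (b, c, a), (c, a, b), (c, b, a)})"

lemma apo_step_scale:
  assumes "l > 0"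
  shows "apo_step (scale_triple l t) = scale_triple l (apo_step t)"
proof -
  obtain a b c where t: "t = (a, b, c)" by (cases t)
  have "sqrt (l*a*(l*b) + l*b*(l*c) + l*c*(l*a)) = sqrt (l^2 * (a*b + b*c + c*a))"
    by (simp add: algebra_simps power2_eq_square)
  also have "\<dots> = l * sqrt (a*b + b*c + c*a)"
    using assms by (simp add: real_sqrt_mult)
  finally have "sqrt (a*(b*(l*l)) + (a*(c*(l*l)) + b*(c*(l*l)))) = l * sqrt (a*b + (a*c + b*c))"
    by (simp add: algebra_simps)
  then show ?thesis
    using assms unfolding t apo_step_def scale_triple_def Let_def by (auto simp: algebra_simps)
qed

lemma funpow_apo_step_scale:
  "l > 0 \<Longrightarrow> (apo_step ^^ n) (scale_triple l t) = scale_triple l ((apo_step ^^ n) t)"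
  by (induction n) (simp_all add: apo_step_scale)

lemma nonpos_triple_scale: "l > 0 \<Longrightarrow> nonpos_triple (scale_triple l t) = nonpos_triple t"
  by (cases t) (auto simp: scale_triple_def nonpos_triple_def mult_le_0_iff)

lemma nonpos_triple_perm: "s \<in> triple_perms t \<Longrightarrow> nonpos_triple s = nonpos_triple t"
  by (cases t) (auto simp: triple_perms_def nonpos_triple_def)

text \<open>With ties the step may replace a different (but equal) entry of the permuted triple,
so the permutation relating the two triples can change from step to step.\<close>
lemma apo_step_perm:
  assumes "s \<in> triple_perms t"
  shows "apo_step s \<in> triple_perms (apo_step t)"
proof -
  obtain a b c where t: "t = (a, b, c)" by (cases t)
  define d where "d = a + b + c - 2 * sqrt (a*b + b*c + c*a)"
  have d_sym: "a + c + b - 2 * sqrt (a*c + c*b + b*a) = d"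
    "b + a + c - 2 * sqrt (b*a + a*c + c*b) = d"
    "b + c + a - 2 * sqrt (b*c + c*a + a*b) = d"
    "c + a + b - 2 * sqrt (c*a + a*b + b*c) = d"
    "c + b + a - 2 * sqrt (c*b + b*a + a*c) = d"
    "a + b + c - 2 * sqrt (a*b + b*c + c*a) = d"
    unfolding d_def by (simp_all add: algebra_simps)
  from assms have "s \<in> {(a, b, c), (a, c, b), (b, a, c), (b, c, a), (c, a, b), (c, b, a)}"
    unfolding t triple_perms_def by simp
  then show ?thesis
    unfolding t triple_perms_def
    by (elim insertE emptyE; simp only: apo_step_def Let_def prod.case d_sym; auto)
qed

lemma funpow_apo_step_perm:
  "s \<in> triple_perms t \<Longrightarrow> (apo_step ^^ n) s \<in> triple_perms ((apo_step ^^ n) t)"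
  by (induction n) (simp_all add: apo_step_perm)

lemma apo_depth_eqI:
  assumes "\<And>n. nonpos_triple ((apo_step ^^ n) (a', b', c')) = nonpos_triple ((apo_step ^^ n) (a, b, c))"
  shows "apo_depth a' b' c' = apo_depth a b c"
  unfolding apo_depth_def assms ..

lemma apo_depth_scale:
  assumes "l > 0"
  shows "apo_depth (l * a) (l * b) (l * c) = apo_depth a b c"
proof (rule apo_depth_eqI)
  fix n
  have "(l * a, l * b, l * c) = scale_triple l (a, b, c)"
    by (simp add: scale_triple_def)
  then show "nonpos_triple ((apo_step ^^ n) (l * a, l * b, l * c)) = nonpos_triple ((apo_step ^^ n) (a, b, c))"
    using assms by (simp add: funpow_apo_step_scale nonpos_triple_scale)
qed

lemma apo_depth_perm:
  assumes "(a', b', c') \<in> triple_perms (a, b, c)"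
  shows "apo_depth a' b' c' = apo_depth a b c"
  by (rule apo_depth_eqI) (meson assms nonpos_triple_perm funpow_apo_step_perm)

lemma ABC_Fmap: "Af (Fmap z) = Cf z" "Bf (Fmap z) = Bf z" "Cf (Fmap z) = Af z"
  by (simp_all add: Af_def Bf_def Cf_def Fmap_def algebra_simps power2_eq_square)

lemma ABC_Smap:
  assumes "z \<noteq> 0"
  shows "Af (Smap z) = Bf z / (cmod z)^2" "Bf (Smap z) = Af z / (cmod z)^2"
    "Cf (Smap z) = Cf z / (cmod z)^2"
proof -
  define r where "r = (Re z)^2 + (Im z)^2"
  have r_cmod: "(cmod z)^2 = r"
    by (simp add: r_def cmod_power2)
  have "r > 0"
    using assms by (simp add: r_def complex_eq_iff sum_power2_gt_zero_iff)
  have Smap_eq: "Smap z = Complex (Re z / r) (Im z / r)"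
    by (simp add: Smap_def r_def)
  show "Af (Smap z) = Bf z / (cmod z)^2"
    using \<open>r > 0\<close> by (simp add: r_cmod Smap_eq Af_def Bf_def field_simps) (simp add: r_def)
  show "Bf (Smap z) = Af z / (cmod z)^2"
    using \<open>r > 0\<close> by (simp add: r_cmod Smap_eq Af_def Bf_def power_divide field_simps)
      (simp add: r_def power2_eq_square algebra_simps)
  show "Cf (Smap z) = Cf z / (cmod z)^2"
    by (simp add: r_cmod Smap_eq Cf_def)
qed

lemma ABC_Rmap:
  assumes "z \<noteq> \<i>"
  shows "Af (Rmap z) = Af z / (cmod (z - \<i>))^2" "Bf (Rmap z) = Cf z / (cmod (z - \<i>))^2"
    "Cf (Rmap z) = Bf z / (cmod (z - \<i>))^2"
proof -
  define q where "q = (Re z)^2 + (Im z - 1)^2"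
  define b where "b = (Re z)^2 + (Im z)^2 - Im z"
  have q_cmod: "(cmod (z - \<i>))^2 = q"
    by (simp add: q_def cmod_power2)
  have "q > 0"
    using assms by (simp add: q_def complex_eq_iff sum_power2_gt_zero_iff)
  have Rmap_eq: "Rmap z = Complex (Re z / q) (b / q)"
    by (simp add: Rmap_def q_def b_def)
  have q_b: "q = b - Im z + 1"
    by (simp add: q_def b_def power2_eq_square algebra_simps)
  have B_numerator: "(Re z)^2 + b^2 - b * q = Im z * q"
    by (simp add: q_b b_def power2_eq_square algebra_simps)
  show "Af (Rmap z) = Af z / (cmod (z - \<i>))^2"
    using \<open>q > 0\<close> by (simp add: q_cmod Rmap_eq Af_def field_simps) (simp add: q_b)
  have "Bf (Rmap z) = ((Re z)^2 + b^2 - b * q) / q^2"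
    using \<open>q > 0\<close> by (simp add: Rmap_eq Bf_def field_simps power2_eq_square)
  then show "Bf (Rmap z) = Cf z / (cmod (z - \<i>))^2"
    using \<open>q > 0\<close> by (simp add: B_numerator q_cmod Cf_def) (simp add: power2_eq_square)
  show "Cf (Rmap z) = Bf z / (cmod (z - \<i>))^2"
    by (simp add: q_cmod Rmap_eq Cf_def Bf_def b_def)
qed

theorem proposition2:
  fixes z :: complex
  shows "(Af (Fmap z) = Cf z \<and> Bf (Fmap z) = Bf z \<and> Cf (Fmap z) = Af z
           \<and> depth_z (Fmap z) = depth_z z)
       \<and> (z \<noteq> 0 \<longrightarrow>
           (\<exists>l::real. l > 0 \<and> Af (Smap z) = l * Bf z \<and> Bf (Smap z) = l * Af z
                 \<and> Cf (Smap z) = l * Cf z)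
           \<and> depth_z (Smap z) = depth_z z)
       \<and> (z \<noteq> \<i> \<longrightarrow>
           (\<exists>l::real. l > 0 \<and> Af (Rmap z) = l * Af z \<and> Bf (Rmap z) = l * Cf z
                 \<and> Cf (Rmap z) = l * Bf z)
           \<and> depth_z (Rmap z) = depth_z z)"
proof (intro conjI impI)
  show "depth_z (Fmap z) = depth_z z"
    unfolding depth_z_def ABC_Fmap by (rule apo_depth_perm) (simp add: triple_perms_def)
next
  assume "z \<noteq> 0"
  define l where "l = 1 / (cmod z)^2"
  have "l > 0" and S: "Af (Smap z) = l * Bf z" "Bf (Smap z) = l * Af z" "Cf (Smap z) = l * Cf z"
    using \<open>z \<noteq> 0\<close> by (simp_all add: l_def ABC_Smap)
  then show "\<exists>l::real. l > 0 \<and> Af (Smap z) = l * Bf z \<and> Bf (Smap z) = l * Af z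
                 \<and> Cf (Smap z) = l * Cf z" by blast
  show "depth_z (Smap z) = depth_z z"
    unfolding depth_z_def S apo_depth_scale[OF \<open>l > 0\<close>]
    by (rule apo_depth_perm) (simp add: triple_perms_def)
next
  assume "z \<noteq> \<i>"
  define l where "l = 1 / (cmod (z - \<i>))^2"
  have "l > 0" and R: "Af (Rmap z) = l * Af z" "Bf (Rmap z) = l * Cf z" "Cf (Rmap z) = l * Bf z"
    using \<open>z \<noteq> \<i>\<close> by (simp_all add: l_def ABC_Rmap)
  then show "\<exists>l::real. l > 0 \<and> Af (Rmap z) = l * Af z \<and> Bf (Rmap z) = l * Cf z
                 \<and> Cf (Rmap z) = l * Bf z" by blast
  show "depth_z (Rmap z) = depth_z z"
    unfolding depth_z_def R apo_depth_scale[OF \<open>l > 0\<close>]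
    by (rule apo_depth_perm) (simp add: triple_perms_def)
qed (simp_all add: ABC_Fmap)

end
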